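(* Let $((x_n,y_n))_{n\in\mathbb N}$ be a sequence in $[0,\infty)^2$ such that $\sum_n(x_n,y_n)$ converges, and assume that $(a,b)\times(c,d)$ is a rectangular gap of $E(x_n,y_n)$. Let $k:=\max\{n\in\mathbb N:\ x_n\geq b-a \text{ or } y_n\geq d-c\}$ (this set of indices is finite and non-empty). Then $(b,d)\in F_k$, and there exists $f\in F_k$ such that $(a,c)=f+\sum_{n>k}(x_n,y_n)$.
   Context: $E(x_n,y_n):=\{\sum_{n\in B}(x_n,y_n):\ B\subset\mathbb N\}$ is the achievement set of the series, and $F_k:=\{\sum_{i\in B}(x_i,y_i):\ B\subset\{1,\dots,k\}\}$ is the set of $k$-initial subsums. For $A\subset\mathbb R^2$ and reals $a<b$, $c<d$, the set $(a,b)\times(c,d)$ is a rectangular gap of $A$ if $([a,b]\times[c,d])\cap A=\{(a,c),(b,d)\}$. *)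

theory Defs
  imports "HOL-Analysis.Analysis"
begin

text \<open>Sequences are indexed from 0 (the paper's index n corresponds to n-1 here).
  A point of the plane is a pair of reals; the series (x_n,y_n) is given componentwise.\<close>

definition achievement_set :: "(nat \<Rightarrow> real) \<Rightarrow> (nat \<Rightarrow> real) \<Rightarrow> (real \<times> real) set" where
  "achievement_set x y =
     {((\<Sum>n. if n \<in> B then x n else 0), (\<Sum>n. if n \<in> B then y n else 0)) | B. B \<subseteq> (UNIV :: nat set)}"

definition initial_subsums :: "(nat \<Rightarrow> real) \<Rightarrow> (nat \<Rightarrow> real) \<Rightarrow> nat \<Rightarrow> (real \<times> real) set" where
  "initial_subsums x y k = {((\<Sum>i\<in>B. x i), (\<Sum>i\<in>B. y i)) | B. B \<subseteq> {..k}}"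

definition rectangular_gap :: "(real \<times> real) set \<Rightarrow> real \<Rightarrow> real \<Rightarrow> real \<Rightarrow> real \<Rightarrow> bool" where
  "rectangular_gap A a b c d \<longleftrightarrow>
     a < b \<and> c < d \<and> ({a..b} \<times> {c..d}) \<inter> A = {(a, c), (b, d)}"

end

theory Submission
  imports Defs
begin

(* Let (a,c) and (b,d) be the subsums over index sets A and B, and call a term small if
   x_n < b - a and y_n < d - c.  Deleting a small term from B, or adding one to A, moves that
   corner by less than the side lengths of the rectangle, so the new subsum lies in the closed
   rectangle; since the gap meets the achievement set only in its two corners, the term must be
   zero.  Terms tend to 0, so the large terms are finite in number and all terms after the last
   large one (index k) are small: hence (b,d) is a subsum of the first terms only, and A contains
   every nonzero term after k.  Finally b > a >= 0, so B contains a nonzero, hence large, term. *)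

definition subseries_sum :: "(nat \<Rightarrow> real) \<Rightarrow> nat set \<Rightarrow> real" where
  "subseries_sum z B = (\<Sum>n. if n \<in> B then z n else 0)"

lemma achievement_set_eq:
  "achievement_set x y = (\<lambda>B. (subseries_sum x B, subseries_sum y B)) ` UNIV"
  unfolding achievement_set_def subseries_sum_def by auto

lemma summable_restrict_nonneg:
  fixes z :: "nat \<Rightarrow> real"
  assumes "summable z" "\<And>n. z n \<ge> 0"
  shows "summable (\<lambda>n. if n \<in> B then z n else 0)"
  by (rule summable_comparison_test[OF _ assms(1)]) (use assms(2) in auto)

lemma subseries_sum_nonneg:
  assumes "summable z" "\<And>n. z n \<ge> 0"
  shows "subseries_sum z B \<ge> 0"
  unfolding subseries_sum_def
  by (rule suminf_nonneg[OF summable_restrict_nonneg[OF assms]]) (use assms(2) in auto)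

lemma subseries_sum_insert:
  assumes "summable z" "\<And>n. z n \<ge> 0" "m \<notin> B"
  shows "subseries_sum z (insert m B) = subseries_sum z B + z m"
proof -
  have split: "(\<lambda>n. if n \<in> insert m B then z n else 0)
      = (\<lambda>n. (if n \<in> B then z n else 0) + (if n = m then z n else 0))"
    using assms(3) by auto
  have "(\<Sum>n. if n = m then z n else 0) = z m"
    using sums_single[of m z] sums_unique by metis
  moreover have "subseries_sum z (insert m B)
      = subseries_sum z B + (\<Sum>n. if n = m then z n else 0)"
    unfolding subseries_sum_def split
    by (rule suminf_add[symmetric]) (auto intro: summable_restrict_nonneg[OF assms(1,2)])
  ultimately show ?thesis
    by simp
qed

lemma subseries_sum_Diff_singleton:
  assumes "summable z" "\<And>n. z n \<ge> 0" "m \<in> B"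
  shows "subseries_sum z (B - {m}) = subseries_sum z B - z m"
  using subseries_sum_insert[OF assms(1,2), of m "B - {m}"] assms(3) by (simp add: insert_absorb)

lemma subseries_sum_eq_initial_sum:
  assumes "\<And>n. n \<in> B \<Longrightarrow> k < n \<Longrightarrow> z n = 0"
  shows "subseries_sum z B = sum z (B \<inter> {..k})"
  unfolding subseries_sum_def
  by (subst suminf_finite[of "B \<inter> {..k}"]) (use assms in \<open>auto intro!: sum.cong simp: not_le\<close>)

lemma subseries_sum_eq_initial_sum_plus_tail:
  assumes "summable z" "\<And>n. z n \<ge> 0" "\<And>n. n \<notin> B \<Longrightarrow> k < n \<Longrightarrow> z n = 0"
  shows "subseries_sum z B = sum z (B \<inter> {..k}) + (\<Sum>n. z (n + Suc k))"
proof -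
  note summable_initial = summable_restrict_nonneg[OF assms(1,2), of "B \<inter> {..k}"]
  note summable_tail = summable_restrict_nonneg[OF assms(1,2), of "{k<..}"]
  have split: "(\<lambda>n. if n \<in> B then z n else 0)
      = (\<lambda>n. (if n \<in> B \<inter> {..k} then z n else 0) + (if n \<in> {k<..} then z n else 0))"
    using assms(3) by (auto simp: not_le)
  have initial: "(\<Sum>n. if n \<in> B \<inter> {..k} then z n else 0) = sum z (B \<inter> {..k})"
    using subseries_sum_eq_initial_sum[of "B \<inter> {..k}" k z] by (simp add: subseries_sum_def)
  have tail: "(\<Sum>n. if n \<in> {k<..} then z n else 0) = (\<Sum>n. z (n + Suc k))"
    using suminf_minus_initial_segment[OF summable_tail, of "Suc k"] by simp
  show ?thesis
    unfolding subseries_sum_def split suminf_add[OF summable_initial summable_tail, symmetric]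
      initial tail ..
qed

lemma finite_large_terms:
  fixes x y :: "nat \<Rightarrow> real"
  assumes "summable x" "summable y" "\<epsilon> > 0" "\<delta> > 0"
  shows "finite {n. x n \<ge> \<epsilon> \<or> y n \<ge> \<delta>}"
proof -
  have "eventually (\<lambda>n. x n < \<epsilon> \<and> y n < \<delta>) sequentially"
    using order_tendstoD(2)[OF summable_LIMSEQ_zero[OF assms(1)] assms(3)]
      order_tendstoD(2)[OF summable_LIMSEQ_zero[OF assms(2)] assms(4)]
    by (rule eventually_conj)
  then show ?thesis
    unfolding cofinite_eq_sequentially[symmetric] eventually_cofinite by (simp add: not_less)
qed

lemma rectangular_gap_corner_in_achievement_set:
  assumes "rectangular_gap A a b c d"
  shows "(a, c) \<in> A" "(b, d) \<in> A"
  using assms unfolding rectangular_gap_def by blast+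

lemma small_term_of_upper_corner_vanishes:
  assumes nonneg: "\<And>n. x n \<ge> 0 \<and> y n \<ge> 0" and conv: "summable x" "summable y"
    and gap: "rectangular_gap (achievement_set x y) a b c d"
    and upper: "b = subseries_sum x B" "d = subseries_sum y B"
    and "n \<in> B" and small: "x n < b - a" "y n < d - c"
  shows "x n = 0 \<and> y n = 0"
proof -
  have "subseries_sum x (B - {n}) = b - x n" "subseries_sum y (B - {n}) = d - y n"
    using subseries_sum_Diff_singleton conv nonneg upper \<open>n \<in> B\<close> by auto
  then have "(b - x n, d - y n) \<in> achievement_set x y"
    unfolding achievement_set_eq by (intro image_eqI[where x="B - {n}", OF _ UNIV_I]) simp
  then have "(b - x n, d - y n) \<in> ({a..b} \<times> {c..d}) \<inter> achievement_set x y"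
    using nonneg[of n] small by auto
  then have "(b - x n, d - y n) \<in> {(a, c), (b, d)}"
    using gap unfolding rectangular_gap_def by simp
  then show ?thesis
    using small by auto
qed

lemma small_term_missing_from_lower_corner_vanishes:
  assumes nonneg: "\<And>n. x n \<ge> 0 \<and> y n \<ge> 0" and conv: "summable x" "summable y"
    and gap: "rectangular_gap (achievement_set x y) a b c d"
    and lower: "a = subseries_sum x A" "c = subseries_sum y A"
    and "n \<notin> A" and small: "x n < b - a" "y n < d - c"
  shows "x n = 0 \<and> y n = 0"
proof -
  have "subseries_sum x (insert n A) = a + x n" "subseries_sum y (insert n A) = c + y n"
    using subseries_sum_insert conv nonneg lower \<open>n \<notin> A\<close> by auto
  then have "(a + x n, c + y n) \<in> achievement_set x y"
    unfolding achievement_set_eq by (intro image_eqI[where x="insert n A", OF _ UNIV_I]) simp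
  then have "(a + x n, c + y n) \<in> ({a..b} \<times> {c..d}) \<inter> achievement_set x y"
    using nonneg[of n] small by auto
  then have "(a + x n, c + y n) \<in> {(a, c), (b, d)}"
    using gap unfolding rectangular_gap_def by simp
  then show ?thesis
    using small by auto
qed

lemma upper_corner_in_initial_subsums:
  assumes nonneg: "\<And>n. x n \<ge> 0 \<and> y n \<ge> 0" and conv: "summable x" "summable y"
    and gap: "rectangular_gap (achievement_set x y) a b c d"
    and small: "\<And>n. k < n \<Longrightarrow> x n < b - a \<and> y n < d - c"
  shows "(b, d) \<in> initial_subsums x y k"
proof -
  obtain B where upper: "b = subseries_sum x B" "d = subseries_sum y B"
    using rectangular_gap_corner_in_achievement_set(2)[OF gap] unfolding achievement_set_eq by auto
  note vanish = small_term_of_upper_corner_vanishes[OF nonneg conv gap upper]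
  have "subseries_sum z B = sum z (B \<inter> {..k})" if "z = x \<or> z = y" for z
    by (rule subseries_sum_eq_initial_sum) (use that vanish small in blast)
  then show ?thesis
    using upper unfolding initial_subsums_def by blast
qed

lemma lower_corner_eq_initial_subsum_plus_tail:
  assumes nonneg: "\<And>n. x n \<ge> 0 \<and> y n \<ge> 0" and conv: "summable x" "summable y"
    and gap: "rectangular_gap (achievement_set x y) a b c d"
    and small: "\<And>n. k < n \<Longrightarrow> x n < b - a \<and> y n < d - c"
  shows "\<exists>f \<in> initial_subsums x y k. (a, c) = f + ((\<Sum>n. x (n + Suc k)), (\<Sum>n. y (n + Suc k)))"
proof -
  obtain A where lower: "a = subseries_sum x A" "c = subseries_sum y A"
    using rectangular_gap_corner_in_achievement_set(1)[OF gap] unfolding achievement_set_eq by auto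
  note vanish = small_term_missing_from_lower_corner_vanishes[OF nonneg conv gap lower]
  have "subseries_sum z A = sum z (A \<inter> {..k}) + (\<Sum>n. z (n + Suc k))" if "z = x \<or> z = y" for z
    by (rule subseries_sum_eq_initial_sum_plus_tail) (use that conv nonneg vanish small in auto)
  then have "(a, c) = (sum x (A \<inter> {..k}), sum y (A \<inter> {..k}))
      + ((\<Sum>n. x (n + Suc k)), (\<Sum>n. y (n + Suc k)))"
    using lower by simp
  moreover have "(sum x (A \<inter> {..k}), sum y (A \<inter> {..k})) \<in> initial_subsums x y k"
    unfolding initial_subsums_def by blast
  ultimately show ?thesis
    by blast
qed

lemma large_terms_nonempty:
  assumes nonneg: "\<And>n. x n \<ge> 0 \<and> y n \<ge> 0" and conv: "summable x" "summable y"
    and gap: "rectangular_gap (achievement_set x y) a b c d"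
  shows "{n. x n \<ge> b - a \<or> y n \<ge> d - c} \<noteq> {}"
proof
  assume no_large: "{n. x n \<ge> b - a \<or> y n \<ge> d - c} = {}"
  obtain A B where lower: "a = subseries_sum x A"
    and upper: "b = subseries_sum x B" "d = subseries_sum y B"
    using rectangular_gap_corner_in_achievement_set[OF gap] unfolding achievement_set_eq by auto
  have "(\<lambda>n. if n \<in> B then x n else 0) = (\<lambda>n. 0)"
    using small_term_of_upper_corner_vanishes[OF nonneg conv gap upper] no_large
    by (force simp: not_le)
  then have "b = 0"
    using upper(1) by (simp add: subseries_sum_def)
  moreover have "a \<ge> 0"
    unfolding lower by (rule subseries_sum_nonneg[OF conv(1)]) (use nonneg in blast)
  ultimately show False
    using gap unfolding rectangular_gap_def by simp
qed

theorem mainTheorem17: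
  fixes x y :: "nat \<Rightarrow> real" and a b c d :: real
  assumes nonneg: "\<And>n. x n \<ge> 0 \<and> y n \<ge> 0"
    and conv: "summable x" "summable y"
    and gap: "rectangular_gap (achievement_set x y) a b c d"
  shows "finite {n. x n \<ge> b - a \<or> y n \<ge> d - c}
     \<and> {n. x n \<ge> b - a \<or> y n \<ge> d - c} \<noteq> {}
     \<and> (let k = Max {n. x n \<ge> b - a \<or> y n \<ge> d - c} in
          (b, d) \<in> initial_subsums x y k
          \<and> (\<exists>f \<in> initial_subsums x y k.
               (a, c) = f + ((\<Sum>n. x (n + Suc k)), (\<Sum>n. y (n + Suc k)))))"
proof -
  let ?L = "{n. x n \<ge> b - a \<or> y n \<ge> d - c}"
  have fin: "finite ?L"
    by (rule finite_large_terms) (use conv gap in \<open>auto simp: rectangular_gap_def\<close>)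
  define k where "k = Max ?L"
  have "x n < b - a \<and> y n < d - c" if "k < n" for n
    using Max_ge[OF fin, of n] that unfolding k_def by force
  then show ?thesis
    using fin large_terms_nonempty[OF nonneg conv gap]
      upper_corner_in_initial_subsums[OF nonneg conv gap]
      lower_corner_eq_initial_subsum_plus_tail[OF nonneg conv gap]
    unfolding k_def Let_def by blast
qed

end
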